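(* Let $n\ge 2$ and let $\Phi\subset\mathbb{R}^3$ be a root system of type $I_2(n)$ lying in a 2-dimensional subspace of $\mathbb{R}^3$, with unit simple roots $\alpha_1,\alpha_2$ (so $\alpha_1\cdot\alpha_2=-\cos\frac{\pi}{n}$). Let $P$ be the group generated under the geometric product by $\Phi\cup\{e_1e_2e_3\}$ and let $G=P\cap\mathrm{Cl}^+(3)$. Then $G$, regarded as a set of vectors in the 4-dimensional Euclidean space $(\mathrm{Cl}^+(3),(\cdot,\cdot))$, is a root system of type $I_2(n)\oplus I_2(n)$, and $\{\alpha_1\alpha_1,\ \alpha_1\alpha_2,\ \alpha_1e_1e_2e_3,\ \alpha_2e_1e_2e_3\}$ is a set of simple roots for it, with Cartan matrix $$\begin{pmatrix}2&-2\cos\frac{\pi}{n}&0&0\\-2\cos\frac{\pi}{n}&2&0&0\\0&0&2&-2\cos\frac{\pi}{n}\\0&0&-2\cos\frac{\pi}{n}&2\end{pmatrix}.$$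
   Context: $\mathrm{Cl}(3)$ is the real Clifford algebra of Euclidean $\mathbb{R}^3$ with orthonormal basis $e_1,e_2,e_3$ ($e_i^2=1$, $e_ie_j=-e_je_i$ for $i\neq j$); vectors of $\mathbb{R}^3$ are elements of $\mathrm{Cl}(3)$ and $e_1e_2e_3$ is the pseudoscalar (inversion). The even subalgebra $\mathrm{Cl}^+(3)$ is spanned by $1,e_2e_3,e_3e_1,e_1e_2$. Reversal $\tilde{\ }$ reverses the order of vector factors. The spinor inner product $(R_1,R_2)=\tfrac12(R_1\tilde R_2+R_2\tilde R_1)$ makes $\mathrm{Cl}^+(3)$ a 4D Euclidean space with orthonormal basis $1,e_2e_3,e_3e_1,e_1e_2$. A root system is a finite set $\Phi$ of nonzero vectors spanning its linear span, with $\Phi\cap\mathbb{R}\alpha=\{\pm\alpha\}$ and $s_\alpha(\Phi)=\Phi$ for all $\alpha\in\Phi$, where $s_\alpha(x)=x-2\frac{(x,\alpha)}{(\alpha,\alpha)}\alpha$. The Cartan matrix of simple roots $\beta_i$ is $A_{ij}=2(\beta_i,\beta_j)/(\beta_i,\beta_i)$. $I_2(n)$ is the rank-2 root system of the dihedral group of order $2n$; $I_2(n)\oplus I_2(n)$ is the union of two copies in mutually orthogonal planes. *)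

theory Defs
  imports "HOL-Analysis.Analysis"
begin

text \<open>A multivector of Cl(3) is given by its 8 coordinates with respect to the basis
  1, e1, e2, e3, e2e3, e3e1, e1e2, e1e2e3 (in this order).\<close>

datatype cl3 = Cl3 (cs: real) (c1: real) (c2: real) (c3: real)
                   (c23: real) (c31: real) (c12: real) (c123: real)

text \<open>The geometric product, determined by e_i e_i = 1 and e_i e_j = - e_j e_i (i \<noteq> j).\<close>

definition clmul :: "cl3 \<Rightarrow> cl3 \<Rightarrow> cl3" (infixl "\<odot>" 70) where
  "a \<odot> b = Cl3
     (cs a * cs b + c1 a * c1 b + c2 a * c2 b + c3 a * c3 b - c23 a * c23 b - c31 a * c31 b - c12 a * c12 b - c123 a * c123 b)
     (cs a * c1 b + c1 a * cs b - c2 a * c12 b + c3 a * c31 b - c23 a * c123 b - c31 a * c3 b + c12 a * c2 b - c123 a * c23 b)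
     (cs a * c2 b + c1 a * c12 b + c2 a * cs b - c3 a * c23 b + c23 a * c3 b - c31 a * c123 b - c12 a * c1 b - c123 a * c31 b)
     (cs a * c3 b - c1 a * c31 b + c2 a * c23 b + c3 a * cs b - c23 a * c2 b + c31 a * c1 b - c12 a * c123 b - c123 a * c12 b)
     (cs a * c23 b + c1 a * c123 b + c2 a * c3 b - c3 a * c2 b + c23 a * cs b - c31 a * c12 b + c12 a * c31 b + c123 a * c1 b)
     (cs a * c31 b - c1 a * c3 b + c2 a * c123 b + c3 a * c1 b + c23 a * c12 b + c31 a * cs b - c12 a * c23 b + c123 a * c2 b)
     (cs a * c12 b + c1 a * c2 b - c2 a * c1 b + c3 a * c123 b - c23 a * c31 b + c31 a * c23 b + c12 a * cs b + c123 a * c3 b)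
     (cs a * c123 b + c1 a * c23 b + c2 a * c31 b + c3 a * c12 b + c23 a * c1 b + c31 a * c2 b + c12 a * c3 b + c123 a * cs b)"

definition cl_one :: cl3 where "cl_one = Cl3 1 0 0 0 0 0 0 0"

definition pseudo :: cl3 where "pseudo = Cl3 0 0 0 0 0 0 0 1"

definition vec :: "real^3 \<Rightarrow> cl3" where
  "vec x = Cl3 0 (x$1) (x$2) (x$3) 0 0 0 0"

definition rev3 :: "cl3 \<Rightarrow> cl3" where
  "rev3 a = Cl3 (cs a) (c1 a) (c2 a) (c3 a) (- c23 a) (- c31 a) (- c12 a) (- c123 a)"

definition even_sub :: "cl3 set" where
  "even_sub = {a. c1 a = 0 \<and> c2 a = 0 \<and> c3 a = 0 \<and> c123 a = 0}"

text \<open>Spinor inner product (R1,R2) = 1/2 (R1 ~R2 + R2 ~R1) (its scalar part; on the even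
  subalgebra the value is a scalar).\<close>
definition spinor_ip :: "cl3 \<Rightarrow> cl3 \<Rightarrow> real" where
  "spinor_ip a b = (cs (a \<odot> rev3 b) + cs (b \<odot> rev3 a)) / 2"

text \<open>Coordinates of an even element w.r.t. the orthonormal basis 1, e2e3, e3e1, e1e2 of
  (Cl^+(3), spinor inner product): this identifies that Euclidean space with real^4.\<close>
definition to4 :: "cl3 \<Rightarrow> real^4" where
  "to4 a = vector [cs a, c23 a, c31 a, c12 a]"

lemma vector_4:
  "(vector [a, b, c, d] :: ('a::zero)^4) $ 1 = a"
  "(vector [a, b, c, d] :: ('a::zero)^4) $ 2 = b"
  "(vector [a, b, c, d] :: ('a::zero)^4) $ 3 = c"
  "(vector [a, b, c, d] :: ('a::zero)^4) $ 4 = d"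
  by (simp_all add: vector_def)

lemma spinor_ip_to4:
  assumes "a \<in> even_sub" "b \<in> even_sub"
  shows "spinor_ip a b = to4 a \<bullet> to4 b"
  using assms
  by (cases a; cases b)
     (simp add: spinor_ip_def clmul_def rev3_def to4_def even_sub_def inner_vec_def
        sum_4 vector_4)

inductive_set gen_group :: "cl3 set \<Rightarrow> cl3 set" for S where
  one: "cl_one \<in> gen_group S"
| gen: "s \<in> S \<Longrightarrow> g \<in> gen_group S \<Longrightarrow> s \<odot> g \<in> gen_group S"
| inv: "s \<in> S \<Longrightarrow> s \<odot> y = cl_one \<Longrightarrow> y \<odot> s = cl_one \<Longrightarrow> g \<in> gen_group S
          \<Longrightarrow> y \<odot> g \<in> gen_group S"

definition refl_along :: "'a::real_inner \<Rightarrow> 'a \<Rightarrow> 'a" where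
  "refl_along \<alpha> x = x - (2 * (x \<bullet> \<alpha>) / (\<alpha> \<bullet> \<alpha>)) *\<^sub>R \<alpha>"

definition root_system :: "'a::real_inner set \<Rightarrow> bool" where
  "root_system \<Phi> \<longleftrightarrow> finite \<Phi> \<and> 0 \<notin> \<Phi>
     \<and> (\<forall>\<alpha>\<in>\<Phi>. {x \<in> \<Phi>. \<exists>c::real. x = c *\<^sub>R \<alpha>} = {\<alpha>, - \<alpha>})
     \<and> (\<forall>\<alpha>\<in>\<Phi>. \<forall>x\<in>\<Phi>. refl_along \<alpha> x \<in> \<Phi>)"

definition simple_roots :: "'a::real_inner set \<Rightarrow> 'a set \<Rightarrow> bool" where
  "simple_roots \<Phi> \<Delta> \<longleftrightarrow> \<Delta> \<subseteq> \<Phi> \<and> independent \<Delta>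
     \<and> (\<forall>\<beta>\<in>\<Phi>. \<exists>c::'a \<Rightarrow> real. \<beta> = (\<Sum>\<delta>\<in>\<Delta>. c \<delta> *\<^sub>R \<delta>)
            \<and> ((\<forall>\<delta>\<in>\<Delta>. c \<delta> \<ge> 0) \<or> (\<forall>\<delta>\<in>\<Delta>. c \<delta> \<le> 0)))"

definition cartan :: "'a::real_inner list \<Rightarrow> nat \<Rightarrow> nat \<Rightarrow> real" where
  "cartan \<beta> i j = 2 * ((\<beta>!i) \<bullet> (\<beta>!j)) / ((\<beta>!i) \<bullet> (\<beta>!i))"

inductive_set dihedral_roots :: "'a::real_inner \<Rightarrow> 'a \<Rightarrow> 'a set" for a b where
  base_a: "a \<in> dihedral_roots a b"
| base_b: "b \<in> dihedral_roots a b"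
| refl_a: "x \<in> dihedral_roots a b \<Longrightarrow> refl_along a x \<in> dihedral_roots a b"
| refl_b: "x \<in> dihedral_roots a b \<Longrightarrow> refl_along b x \<in> dihedral_roots a b"

definition type_I2 :: "nat \<Rightarrow> 'a::real_inner set \<Rightarrow> bool" where
  "type_I2 n \<Psi> \<longleftrightarrow> (\<exists>a b. norm a = 1 \<and> norm b = 1 \<and> a \<bullet> b = - cos (pi / real n)
      \<and> \<Psi> = dihedral_roots a b)"

definition type_I2_sum :: "nat \<Rightarrow> 'a::real_inner set \<Rightarrow> bool" where
  "type_I2_sum n \<Psi> \<longleftrightarrow> (\<exists>\<Psi>1 \<Psi>2. \<Psi> = \<Psi>1 \<union> \<Psi>2 \<and> type_I2 n \<Psi>1 \<and> type_I2 n \<Psi>2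
      \<and> (\<forall>x\<in>span \<Psi>1. \<forall>y\<in>span \<Psi>2. x \<bullet> y = 0))"

definition cartan_I2I2 :: "nat \<Rightarrow> nat \<Rightarrow> nat \<Rightarrow> real" where
  "cartan_I2I2 n i j = (let c = - 2 * cos (pi / real n) in
     [[2, c, 0, 0], [c, 2, 0, 0], [0, 0, 2, c], [0, 0, c, 2]] ! i ! j)"

end

theory Submission
  imports Defs
begin

(* Write alpha1 = u and alpha2 = cos g u + sin g w with u, w orthonormal and g = pi - pi/n, and
   let N = u x w.  Then Phi is the regular 2n-gon of unit vectors R(t) = cos t u + sin t w,
   t in (pi/n)Z.  The product of two of them is the rotor R(a) R(b) = cos (b - a) + sin (b - a) I N,
   and the pseudoscalar I is central with I^2 = -1, so P consists of the vectors R(t), the rotors,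
   and their multiples by I; its even part consists of the rotors and the bivectors I R(t).  In the
   coordinates 1, e2e3, e3e1, e1e2 these are two regular 2n-gons of unit vectors in the orthogonal
   planes spanned by 1, I N and by I u, I w, and each such 2n-gon is a root system I_2(n) with
   simple roots at angle pi - pi/n. *)

section \<open>Arithmetic in Cl(3)\<close>

lemma clmul_assoc: "(a \<odot> b) \<odot> c = a \<odot> (b \<odot> c)"
  by (cases a; cases b; cases c) (simp add: clmul_def algebra_simps)

lemma clmul_one_left [simp]: "cl_one \<odot> a = a"
  by (cases a) (simp add: cl_one_def clmul_def)

lemma clmul_one_right [simp]: "a \<odot> cl_one = a"
  by (cases a) (simp add: cl_one_def clmul_def)

lemma left_inverse_unique:
  assumes "y \<odot> a = cl_one" and "a \<odot> b = cl_one"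
  shows "y = b"
  by (metis assms clmul_assoc clmul_one_left clmul_one_right)

(* With I = e1e2e3, cl_even s B = s + I B and cl_odd v t = v + t I; note that I e1 = e2e3 etc. *)

definition cl_even :: "real \<Rightarrow> real^3 \<Rightarrow> cl3" where
  "cl_even s B = Cl3 s 0 0 0 (B$1) (B$2) (B$3) 0"

definition cl_odd :: "real^3 \<Rightarrow> real \<Rightarrow> cl3" where
  "cl_odd v t = Cl3 0 (v$1) (v$2) (v$3) 0 0 0 t"

lemma vec_eq_cl_odd: "vec x = cl_odd x 0"
  by (simp add: vec_def cl_odd_def)

lemma cl_one_eq_cl_even: "cl_one = cl_even 1 0"
  by (simp add: cl_one_def cl_even_def)

lemma vec_mult_cl_even: "vec x \<odot> cl_even s B = cl_odd (s *\<^sub>R x - cross3 x B) (x \<bullet> B)"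
  by (simp add: vec_def cl_even_def cl_odd_def clmul_def cross_components inner_vec_def
      sum_3 algebra_simps)

lemma vec_mult_cl_odd: "vec x \<odot> cl_odd v t = cl_even (x \<bullet> v) (cross3 x v + t *\<^sub>R x)"
  by (simp add: vec_def cl_even_def cl_odd_def clmul_def cross_components inner_vec_def
      sum_3 algebra_simps)

lemma vec_mult_self: "x \<bullet> x = 1 \<Longrightarrow> vec x \<odot> vec x = cl_one"
  using vec_mult_cl_odd[of x x 0] by (simp add: cl_one_eq_cl_even flip: vec_eq_cl_odd)

lemma pseudo_mult_cl_even: "pseudo \<odot> cl_even s B = cl_odd (- B) s"
  by (simp add: pseudo_def cl_even_def cl_odd_def clmul_def)

lemma pseudo_mult_cl_odd: "pseudo \<odot> cl_odd v t = cl_even (- t) v"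
  by (simp add: pseudo_def cl_even_def cl_odd_def clmul_def)

lemma vec_mult_pseudo: "vec x \<odot> pseudo = cl_even 0 x"
  by (simp add: pseudo_def cl_even_def vec_def clmul_def)

lemma pseudo_mult_inverse: "pseudo \<odot> cl_odd 0 (- 1) = cl_one"
  by (simp add: pseudo_def cl_odd_def cl_one_def clmul_def)

lemma neg_pseudo_mult_cl_even: "cl_odd 0 (- 1) \<odot> cl_even s B = cl_odd B (- s)"
  by (simp add: cl_even_def cl_odd_def clmul_def)

lemma neg_pseudo_mult_cl_odd: "cl_odd 0 (- 1) \<odot> cl_odd v t = cl_even t (- v)"
  by (simp add: cl_even_def cl_odd_def clmul_def)

lemma cl_even_in_even_sub: "cl_even s B \<in> even_sub"
  by (simp add: cl_even_def even_sub_def)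

lemma cl_odd_in_even_sub_iff: "cl_odd v t \<in> even_sub \<longleftrightarrow> v = 0 \<and> t = 0"
  by (auto simp: cl_odd_def even_sub_def vec_eq_iff forall_3)

definition embed3 :: "real^3 \<Rightarrow> real^4" where
  "embed3 x = vector [0, x$1, x$2, x$3]"

lemma to4_cl_even: "to4 (cl_even s B) = s *\<^sub>R to4 cl_one + embed3 B"
  by (simp add: to4_def cl_even_def cl_one_def embed3_def vec_eq_iff forall_4 vector_4)

lemma embed3_add: "embed3 (x + y) = embed3 x + embed3 y"
  by (simp add: embed3_def vec_eq_iff forall_4 vector_4)

lemma embed3_scaleR: "embed3 (c *\<^sub>R x) = c *\<^sub>R embed3 x"
  by (simp add: embed3_def vec_eq_iff forall_4 vector_4)

lemma inner_embed3: "embed3 x \<bullet> embed3 y = x \<bullet> y"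
  by (simp add: embed3_def inner_vec_def sum_4 sum_3 vector_4)

lemma inner_to4_one: "to4 cl_one \<bullet> to4 cl_one = 1" "to4 cl_one \<bullet> embed3 x = 0"
  by (simp_all add: embed3_def to4_def cl_one_def inner_vec_def sum_4 vector_4)

section \<open>Regular polygons of unit vectors\<close>

definition circle :: "'a::real_vector \<Rightarrow> 'a \<Rightarrow> real \<Rightarrow> 'a" where
  "circle e f t = cos t *\<^sub>R e + sin t *\<^sub>R f"

definition root_angle :: "nat \<Rightarrow> int \<Rightarrow> real" where
  "root_angle n k = of_int k * pi / real n"

definition polygon_roots :: "'a::real_vector \<Rightarrow> 'a \<Rightarrow> nat \<Rightarrow> 'a set" where
  "polygon_roots e f n = circle e f ` range (root_angle n)"

lemma circle_zero [simp]: "circle e f 0 = e"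
  by (simp add: circle_def)

lemma circle_add_pi: "circle e f (t + pi) = - circle e f t"
  by (simp add: circle_def)

lemma circle_add_2pi_multiple: "circle e f (t + of_int m * (2 * pi)) = circle e f t"
proof -
  have "cos (t + of_int m * (2 * pi)) = cos t" "sin (t + of_int m * (2 * pi)) = sin t"
    using cos_int_2pin[of m] sin_int_2pin[of m] by (simp_all add: cos_add sin_add mult.commute)
  then show ?thesis by (simp add: circle_def)
qed

lemma root_angle_zero [simp]: "root_angle n 0 = 0"
  by (simp add: root_angle_def)

lemma root_angle_add: "root_angle n (a + b) = root_angle n a + root_angle n b"
  by (simp add: root_angle_def add_divide_distrib algebra_simps)

lemma root_angle_diff: "root_angle n (a - b) = root_angle n a - root_angle n b"
  by (simp add: root_angle_def diff_divide_distrib algebra_simps)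

lemma root_angle_add_n: "n > 0 \<Longrightarrow> root_angle n (k + int n) = root_angle n k + pi"
  by (simp add: root_angle_def field_simps)

lemma root_angle_pred_n: "n > 0 \<Longrightarrow> root_angle n (int n - 1) = pi - pi / real n"
  by (simp add: root_angle_def field_simps)

lemma sin_root_angle_pred_n_pos:
  assumes "n \<ge> 2"
  shows "sin (root_angle n (int n - 1)) > 0"
proof -
  have "0 < pi / real n" "pi / real n < pi"
    using assms by (simp_all add: divide_less_eq)
  then show ?thesis using assms by (simp add: root_angle_pred_n sin_gt_zero)
qed

lemma circle_root_angle_mod:
  assumes "n > 0"
  shows "circle e f (root_angle n (k mod (2 * int n))) = circle e f (root_angle n k)"
proof -
  have "root_angle n k
      = root_angle n (k mod (2 * int n)) + of_int (k div (2 * int n)) * (2 * pi)"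
    using assms by (subst mod_mult_div_eq[of k "2 * int n", symmetric])
      (simp add: root_angle_add root_angle_def field_simps)
  then show ?thesis by (simp add: circle_add_2pi_multiple)
qed

lemma finite_polygon_roots:
  assumes "n > 0"
  shows "finite (polygon_roots e f n)"
proof -
  have "polygon_roots e f n = (\<lambda>k. circle e f (root_angle n k)) ` {0..<2 * int n}"
  proof (intro equalityI subsetI)
    fix x assume "x \<in> polygon_roots e f n"
    then obtain k where "x = circle e f (root_angle n (k mod (2 * int n)))"
      by (auto simp: polygon_roots_def circle_root_angle_mod[OF assms])
    moreover have "k mod (2 * int n) \<in> {0..<2 * int n}" using assms by simp
    ultimately show "x \<in> (\<lambda>k. circle e f (root_angle n k)) ` {0..<2 * int n}" by blast
  qed (auto simp: polygon_roots_def)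
  then show ?thesis by simp
qed

lemma uminus_in_polygon_roots:
  assumes "n > 0" and "x \<in> polygon_roots e f n"
  shows "- x \<in> polygon_roots e f n"
proof -
  obtain k where "x = circle e f (root_angle n k)"
    using assms(2) by (auto simp: polygon_roots_def)
  then have "- x = circle e f (root_angle n (k + int n))"
    using assms(1) by (simp add: root_angle_add_n circle_add_pi)
  then show ?thesis by (simp add: polygon_roots_def)
qed

(* On the index k of the angle k pi / n, the reflections along the two simple roots of a regular
   2n-gon act as k \<mapsto> n - k and k \<mapsto> n - 2 - k (the latter modulo 2n). *)
lemma int_closed_under_two_reflections:
  fixes n :: int and Q :: "int \<Rightarrow> bool"
  assumes "Q 0" and "Q (n - 1)"
    and reflect_a: "\<And>k. Q k \<Longrightarrow> Q (n - k)"
    and reflect_b: "\<And>k. Q k \<Longrightarrow> Q (n - 2 - k)"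
  shows "Q k"
proof -
  have shift: "Q (k + 2 * j)" if "Q k" for k j
  proof (induction j rule: int_induct[where k = 0])
    case base
    show ?case using that by simp
  next
    case (step1 i)
    then have "Q (n - (n - 2 - (k + 2 * i)))" by (intro reflect_a reflect_b)
    then show ?case by (simp add: algebra_simps)
  next
    case (step2 i)
    then have "Q (n - 2 - (n - (k + 2 * i)))" by (intro reflect_a reflect_b)
    then show ?case by (simp add: algebra_simps)
  qed
  show ?thesis
  proof (cases "even k")
    case True
    then obtain j where "k = 0 + 2 * j" by auto
    then show ?thesis using shift[OF \<open>Q 0\<close>] by simp
  next
    case False
    have "Q n" using reflect_a[OF \<open>Q 0\<close>] by simp
    then obtain m where "Q m" "even (k - m)"
      using \<open>Q (n - 1)\<close> False by (cases "even n") auto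
    then obtain j where "k = m + 2 * j" by (metis add.commute diff_add_cancel evenE)
    then show ?thesis using shift[OF \<open>Q m\<close>] by simp
  qed
qed

lemma circle_nonneg_combination:
  assumes "sin g > 0" and "g \<le> pi" and "0 \<le> t" and "t \<le> g"
  shows "\<exists>a b. circle e f t = a *\<^sub>R e + b *\<^sub>R circle e f g \<and> a \<ge> 0 \<and> b \<ge> 0"
proof (intro exI conjI)
  let ?a = "sin (g - t) / sin g" and ?b = "sin t / sin g"
  have "?a + ?b * cos g = cos t" "?b * sin g = sin t"
    using assms(1) by (simp_all add: field_simps sin_diff)
  then show "circle e f t = ?a *\<^sub>R e + ?b *\<^sub>R circle e f g"
    by (simp add: circle_def algebra_simps flip: scaleR_add_left)
  show "?a \<ge> 0" "?b \<ge> 0"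
    using assms by (simp_all add: sin_ge_zero)
qed

lemma polygon_root_sign_combination:
  assumes "n \<ge> 2" and "x \<in> polygon_roots e f n"
  shows "\<exists>a b. x = a *\<^sub>R e + b *\<^sub>R circle e f (root_angle n (int n - 1))
           \<and> ((a \<ge> 0 \<and> b \<ge> 0) \<or> (a \<le> 0 \<and> b \<le> 0))"
proof -
  let ?g = "root_angle n (int n - 1)"
  have n: "n > 0" using assms(1) by simp
  have nonneg: "\<exists>a b. circle e f (root_angle n j) = a *\<^sub>R e + b *\<^sub>R circle e f ?g
                  \<and> a \<ge> 0 \<and> b \<ge> 0" if "0 \<le> j" "j \<le> int n - 1" for j
  proof (rule circle_nonneg_combination)
    show "sin ?g > 0" using sin_root_angle_pred_n_pos[OF assms(1)] .
    show "?g \<le> pi" using n by (simp add: root_angle_pred_n)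
    show "0 \<le> root_angle n j" "root_angle n j \<le> ?g"
      using that n by (simp_all add: root_angle_def divide_right_mono)
  qed
  obtain k where x: "x = circle e f (root_angle n (k mod (2 * int n)))"
    using assms(2) by (auto simp: polygon_roots_def circle_root_angle_mod[OF n])
  define j where "j = k mod (2 * int n)"
  have j: "0 \<le> j" "j < 2 * int n" using n by (simp_all add: j_def)
  show ?thesis
  proof (cases "j \<le> int n - 1")
    case True
    then show ?thesis using nonneg[of j] j x by (auto simp: j_def)
  next
    case False
    then obtain a b
      where ab: "circle e f (root_angle n (j - int n)) = a *\<^sub>R e + b *\<^sub>R circle e f ?g"
        "a \<ge> 0" "b \<ge> 0"
      using nonneg[of "j - int n"] j by auto
    have "x = - circle e f (root_angle n (j - int n))"
      using n by (simp add: x j_def root_angle_add_n[symmetric] circle_add_pi[symmetric])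
    then show ?thesis using ab by (intro exI[of _ "- a"] exI[of _ "- b"]) auto
  qed
qed

locale orthonormal_pair =
  fixes e f :: "'a::real_inner"
  assumes inner_e: "e \<bullet> e = 1" and inner_f: "f \<bullet> f = 1" and inner_e_f: "e \<bullet> f = 0"
begin

lemma inner_circle: "circle e f a \<bullet> circle e f b = cos (b - a)"
  using inner_e inner_f inner_e_f
  by (simp add: circle_def inner_add_left inner_add_right inner_commute cos_diff algebra_simps)

lemma norm_circle [simp]: "norm (circle e f a) = 1"
  using inner_circle[of a a] by (simp add: norm_eq_sqrt_inner)

lemma refl_along_circle: "refl_along (circle e f a) (circle e f b) = circle e f (2 * a + pi - b)"
proof -
  have refl: "refl_along (circle e f a) (circle e f b)
            = circle e f b - (2 * cos (a - b)) *\<^sub>R circle e f a"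
    using inner_circle[of a a] inner_circle[of a b] cos_minus[of "a - b"]
    by (simp add: refl_along_def inner_commute del: cos_minus)
  have shift: "2 * a + pi - b = (2 * a - b) + pi" by simp
  have cos: "cos (2 * a + pi - b) = cos b - 2 * cos (a - b) * cos a"
    unfolding shift cos_periodic_pi cos_diff cos_double_cos sin_double
    by (simp add: power2_eq_square algebra_simps)
  have sin: "sin (2 * a + pi - b) = sin b - 2 * cos (a - b) * sin a"
    unfolding shift sin_periodic_pi sin_diff cos_diff cos_double_cos sin_double
    using sin_cos_squared_add[of a] by algebra
  show ?thesis unfolding refl unfolding circle_def cos sin by (simp add: algebra_simps)
qed

lemma refl_along_circle_root_angle:
  assumes "n > 0"
  shows "refl_along (circle e f (root_angle n a)) (circle e f (root_angle n b))
       = circle e f (root_angle n (2 * a + int n - b))"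
proof -
  have "root_angle n (2 * a + int n - b) = 2 * root_angle n a + pi - root_angle n b"
    using assms by (simp add: root_angle_def field_simps)
  then show ?thesis by (simp add: refl_along_circle)
qed

lemma polygon_roots_eq_dihedral_roots:
  assumes n: "n > 0"
  shows "polygon_roots e f n = dihedral_roots e (circle e f (root_angle n (int n - 1)))"
    (is "_ = ?D")
proof
  show "?D \<subseteq> polygon_roots e f n"
  proof
    fix x assume "x \<in> ?D"
    then show "x \<in> polygon_roots e f n"
    proof (induction rule: dihedral_roots.induct)
      case base_a
      show ?case using circle_zero[of e f] root_angle_zero[of n]
        unfolding polygon_roots_def by (metis rangeI image_eqI)
    next
      case base_b
      show ?case by (simp add: polygon_roots_def)
    next
      case (refl_a x)
      then obtain k where "x = circle e f (root_angle n k)" by (auto simp: polygon_roots_def)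
      then show ?case
        using refl_along_circle_root_angle[OF n, of 0 k] by (simp add: polygon_roots_def)
    next
      case (refl_b x)
      then obtain k where "x = circle e f (root_angle n k)" by (auto simp: polygon_roots_def)
      then show ?case
        using refl_along_circle_root_angle[OF n, of "int n - 1" k] by (simp add: polygon_roots_def)
    qed
  qed
  define Q where "Q k \<longleftrightarrow> circle e f (root_angle n k) \<in> ?D" for k
  have "Q k" for k
  proof (rule int_closed_under_two_reflections[where n = "int n"])
    show "Q 0" using dihedral_roots.base_a by (simp add: Q_def)
    show "Q (int n - 1)" using dihedral_roots.base_b by (simp add: Q_def)
  next
    fix k assume "Q k"
    then have k: "circle e f (root_angle n k) \<in> ?D" by (simp add: Q_def)
    show "Q (int n - k)"
      using dihedral_roots.refl_a[OF k] refl_along_circle_root_angle[OF n, of 0 k]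
      by (simp add: Q_def)
    have "2 * (int n - 1) + int n - k = (int n - 2 - k) + int n + int n" by simp
    then have "circle e f (root_angle n (2 * (int n - 1) + int n - k))
             = circle e f (root_angle n (int n - 2 - k))"
      using n by (simp only: root_angle_add_n circle_add_pi minus_minus)
    then show "Q (int n - 2 - k)"
      using dihedral_roots.refl_b[OF k] refl_along_circle_root_angle[OF n, of "int n - 1" k]
      by (simp add: Q_def)
  qed
  then show "polygon_roots e f n \<subseteq> ?D" by (auto simp: Q_def polygon_roots_def)
qed

lemma type_I2_polygon_roots:
  assumes "n > 0"
  shows "type_I2 n (polygon_roots e f n)"
  unfolding type_I2_def
proof (intro exI conjI)
  let ?b = "circle e f (root_angle n (int n - 1))"
  show "norm e = 1" using inner_e by (simp add: norm_eq_sqrt_inner)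
  show "norm ?b = 1" by simp
  show "e \<bullet> ?b = - cos (pi / real n)"
    using inner_circle[of 0 "root_angle n (int n - 1)"] assms by (simp add: root_angle_pred_n)
  show "polygon_roots e f n = dihedral_roots e ?b"
    using polygon_roots_eq_dihedral_roots[OF assms] .
qed

end

lemma orthonormal_completion:
  fixes a b :: "'a::real_inner"
  assumes "norm a = 1" and "norm b = 1" and "a \<bullet> b = cos \<gamma>" and "sin \<gamma> > 0"
  obtains f where "orthonormal_pair a f" and "b = circle a f \<gamma>"
proof
  let ?f = "(1 / sin \<gamma>) *\<^sub>R (b - cos \<gamma> *\<^sub>R a)"
  have aa: "a \<bullet> a = 1" and bb: "b \<bullet> b = 1" and ba: "b \<bullet> a = cos \<gamma>"
    using assms(1-3) by (simp_all add: dot_square_norm inner_commute flip: power2_norm_eq_inner)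
  have "(b - cos \<gamma> *\<^sub>R a) \<bullet> (b - cos \<gamma> *\<^sub>R a) = (sin \<gamma>)\<^sup>2"
    using sin_cos_squared_add[of \<gamma>]
    by (simp add: inner_diff_left inner_diff_right aa bb ba assms(3) power2_eq_square algebra_simps)
  then have "?f \<bullet> ?f = 1" using assms(4) by (simp add: power2_eq_square)
  moreover have "a \<bullet> ?f = 0" by (simp add: inner_diff_right aa assms(3))
  ultimately show "orthonormal_pair a ?f" using aa by unfold_locales
  show "b = circle a ?f \<gamma>" using assms(4) by (simp add: circle_def)
qed

section \<open>Orthogonal sums of root systems\<close>

lemma refl_along_orthogonal: "x \<bullet> \<alpha> = 0 \<Longrightarrow> refl_along \<alpha> x = x"
  by (simp add: refl_along_def)

lemma inner_span_orthogonal: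
  assumes "\<And>a b. a \<in> A \<Longrightarrow> b \<in> B \<Longrightarrow> a \<bullet> b = 0" and "x \<in> span A" and "y \<in> span B"
  shows "x \<bullet> y = 0"
proof -
  have "orthogonal y a" if "a \<in> A" for a
    using orthogonal_to_span[OF assms(3)] assms(1)[OF that]
    by (simp add: orthogonal_def inner_commute)
  then have "orthogonal y x" by (rule orthogonal_to_span[OF assms(2)])
  then show ?thesis by (simp add: orthogonal_def inner_commute)
qed

lemma root_system_Un_orthogonal:
  assumes A: "root_system A" and B: "root_system B"
    and orth: "\<And>a b. a \<in> A \<Longrightarrow> b \<in> B \<Longrightarrow> a \<bullet> b = 0"
  shows "root_system (A \<union> B)"
proof -
  have no_multiple: "x \<noteq> c *\<^sub>R \<alpha>"
    if "\<alpha> \<in> A \<and> x \<in> B \<or> \<alpha> \<in> B \<and> x \<in> A" for \<alpha> x and c :: real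
  proof
    assume "x = c *\<^sub>R \<alpha>"
    then have "x \<bullet> x = c * (x \<bullet> \<alpha>)" by simp
    also have "x \<bullet> \<alpha> = 0" using that orth inner_commute by metis
    finally have "x = 0" by simp
    then show False using that A B by (auto simp: root_system_def)
  qed
  have lines: "{x \<in> A \<union> B. \<exists>c::real. x = c *\<^sub>R \<alpha>} = {\<alpha>, - \<alpha>}" if "\<alpha> \<in> A \<union> B" for \<alpha>
  proof (cases "\<alpha> \<in> A")
    case True
    then have "{x \<in> A \<union> B. \<exists>c::real. x = c *\<^sub>R \<alpha>} = {x \<in> A. \<exists>c::real. x = c *\<^sub>R \<alpha>}"
      using no_multiple by blast
    then show ?thesis using A True by (simp add: root_system_def)
  next
    case False
    then have "\<alpha> \<in> B" using that by simp
    then have "{x \<in> A \<union> B. \<exists>c::real. x = c *\<^sub>R \<alpha>} = {x \<in> B. \<exists>c::real. x = c *\<^sub>R \<alpha>}"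
      using no_multiple by blast
    then show ?thesis using B \<open>\<alpha> \<in> B\<close> by (simp add: root_system_def)
  qed
  have reflections: "refl_along \<alpha> x \<in> A \<union> B" if roots: "\<alpha> \<in> A \<union> B" "x \<in> A \<union> B" for \<alpha> x
  proof -
    consider "\<alpha> \<in> A" "x \<in> A" | "\<alpha> \<in> B" "x \<in> B" | "x \<bullet> \<alpha> = 0"
      using roots orth by (metis Un_iff inner_commute)
    then show ?thesis
      using A B refl_along_orthogonal[of x \<alpha>] roots by cases (auto simp: root_system_def)
  qed
  show ?thesis
    using A B lines reflections by (simp add: root_system_def)
qed

lemma independent_Un_orthogonal:
  fixes A B :: "'a::real_inner set"
  assumes "independent A" "independent B" "finite A" "finite B"
    and orth: "\<And>a b. a \<in> A \<Longrightarrow> b \<in> B \<Longrightarrow> a \<bullet> b = 0"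
  shows "independent (A \<union> B)"
proof
  assume "dependent (A \<union> B)"
  then obtain u where u: "\<exists>v\<in>A \<union> B. u v \<noteq> 0" "(\<Sum>v\<in>A \<union> B. u v *\<^sub>R v) = 0"
    using assms(3,4) by (auto simp: dependent_finite)
  let ?x = "\<Sum>v\<in>A. u v *\<^sub>R v" and ?y = "\<Sum>v\<in>B. u v *\<^sub>R v"
  have "A \<inter> B = {}"
    using orth assms(1) by (metis disjoint_iff inner_eq_zero_iff dependent_zero)
  then have "?x + ?y = 0" using u(2) assms(3,4) by (simp add: sum.union_disjoint)
  then have y: "?y = - ?x" by (simp add: add_eq_0_iff)
  have "?x \<bullet> ?y = 0"
    by (rule inner_span_orthogonal[OF orth]) (auto intro: span_sum span_scale span_base)
  then have "?x = 0" "?y = 0" by (simp_all add: y)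
  then have "\<forall>v\<in>A. u v = 0" "\<forall>v\<in>B. u v = 0"
    using assms(1-4) by (auto simp: dependent_finite)
  then show False using u(1) by auto
qed

lemma sign_combination_extend:
  fixes \<beta> :: "'a::real_vector"
  assumes "finite D'" and "D \<subseteq> D'"
    and "\<beta> = (\<Sum>\<delta>\<in>D. c \<delta> *\<^sub>R \<delta>)" and "(\<forall>\<delta>\<in>D. c \<delta> \<ge> 0) \<or> (\<forall>\<delta>\<in>D. c \<delta> \<le> 0)"
  shows "\<exists>c'. \<beta> = (\<Sum>\<delta>\<in>D'. c' \<delta> *\<^sub>R \<delta>) \<and> ((\<forall>\<delta>\<in>D'. c' \<delta> \<ge> 0) \<or> (\<forall>\<delta>\<in>D'. c' \<delta> \<le> 0))"
proof (intro exI conjI)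
  let ?c' = "\<lambda>\<delta>. if \<delta> \<in> D then c \<delta> else 0"
  have "(\<Sum>\<delta>\<in>D'. ?c' \<delta> *\<^sub>R \<delta>) = (\<Sum>\<delta>\<in>D'. if \<delta> \<in> D then c \<delta> *\<^sub>R \<delta> else 0)"
    by (rule sum.cong) auto
  also have "\<dots> = (\<Sum>\<delta>\<in>D' \<inter> D. c \<delta> *\<^sub>R \<delta>)"
    using assms(1) by (simp add: sum.inter_restrict)
  also have "D' \<inter> D = D" using assms(2) by blast
  finally show "\<beta> = (\<Sum>\<delta>\<in>D'. ?c' \<delta> *\<^sub>R \<delta>)" using assms(3) by simp
  show "(\<forall>\<delta>\<in>D'. ?c' \<delta> \<ge> 0) \<or> (\<forall>\<delta>\<in>D'. ?c' \<delta> \<le> 0)" using assms(4) by auto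
qed

lemma simple_roots_Un_orthogonal:
  fixes A B :: "'a::real_inner set"
  assumes A: "simple_roots A \<Delta>A" and B: "simple_roots B \<Delta>B"
    and "finite \<Delta>A" and "finite \<Delta>B"
    and orth: "\<And>a b. a \<in> A \<Longrightarrow> b \<in> B \<Longrightarrow> a \<bullet> b = 0"
  shows "simple_roots (A \<union> B) (\<Delta>A \<union> \<Delta>B)"
  unfolding simple_roots_def
proof (intro conjI ballI)
  show "\<Delta>A \<union> \<Delta>B \<subseteq> A \<union> B" using A B by (auto simp: simple_roots_def)
  show "independent (\<Delta>A \<union> \<Delta>B)"
    using A B assms(3,4) orth
    by (intro independent_Un_orthogonal) (auto simp: simple_roots_def)
next
  fix \<beta> assume "\<beta> \<in> A \<union> B"
  then obtain D c where "D \<subseteq> \<Delta>A \<union> \<Delta>B" "\<beta> = (\<Sum>\<delta>\<in>D. c \<delta> *\<^sub>R \<delta>)"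
    "(\<forall>\<delta>\<in>D. c \<delta> \<ge> 0) \<or> (\<forall>\<delta>\<in>D. c \<delta> \<le> 0)"
    using A B unfolding simple_roots_def by blast
  then show "\<exists>c. \<beta> = (\<Sum>\<delta>\<in>\<Delta>A \<union> \<Delta>B. c \<delta> *\<^sub>R \<delta>)
      \<and> ((\<forall>\<delta>\<in>\<Delta>A \<union> \<Delta>B. c \<delta> \<ge> 0) \<or> (\<forall>\<delta>\<in>\<Delta>A \<union> \<Delta>B. c \<delta> \<le> 0))"
    using assms(3,4) by (intro sign_combination_extend) auto
qed

context orthonormal_pair
begin

lemma root_system_polygon_roots:
  assumes n: "n > 0"
  shows "root_system (polygon_roots e f n)"
  unfolding root_system_def
proof (intro conjI ballI)
  have unit: "norm x = 1" if "x \<in> polygon_roots e f n" for x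
    using that by (auto simp: polygon_roots_def)
  show "finite (polygon_roots e f n)" using finite_polygon_roots[OF n] .
  show "0 \<notin> polygon_roots e f n" using unit by force
  fix \<alpha> assume \<alpha>: "\<alpha> \<in> polygon_roots e f n"
  show "{x \<in> polygon_roots e f n. \<exists>c::real. x = c *\<^sub>R \<alpha>} = {\<alpha>, - \<alpha>}"
  proof (intro equalityI subsetI)
    fix x assume "x \<in> {x \<in> polygon_roots e f n. \<exists>c::real. x = c *\<^sub>R \<alpha>}"
    then obtain c where x: "x \<in> polygon_roots e f n" "x = c *\<^sub>R \<alpha>" by auto
    then have "\<bar>c\<bar> = 1" using unit[OF x(1)] unit[OF \<alpha>] by simp
    then show "x \<in> {\<alpha>, - \<alpha>}" using x(2) by (cases "c \<ge> 0") auto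
  next
    fix x assume "x \<in> {\<alpha>, - \<alpha>}"
    then show "x \<in> {x \<in> polygon_roots e f n. \<exists>c::real. x = c *\<^sub>R \<alpha>}"
      using \<alpha> uminus_in_polygon_roots[OF n \<alpha>]
      by (auto intro: exI[of _ 1] exI[of _ "- 1"])
  qed
  fix x assume "x \<in> polygon_roots e f n"
  then show "refl_along \<alpha> x \<in> polygon_roots e f n"
    using \<alpha> refl_along_circle_root_angle[OF n] by (auto simp: polygon_roots_def)
qed

lemma circle_root_angle_pred_n_notin_span:
  assumes "n \<ge> 2"
  shows "circle e f (root_angle n (int n - 1)) \<notin> span {e}"
proof
  let ?b = "circle e f (root_angle n (int n - 1))"
  assume "?b \<in> span {e}"
  then obtain c where "?b = c *\<^sub>R e" by (auto simp: span_singleton)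
  then have "?b \<bullet> f = 0" using inner_e_f by simp
  moreover have "?b \<bullet> f = sin (root_angle n (int n - 1))"
    using inner_e_f inner_f by (simp add: circle_def inner_add_left)
  ultimately show False using sin_root_angle_pred_n_pos[OF assms] by simp
qed

lemma simple_roots_polygon_roots:
  assumes n: "n \<ge> 2"
  shows "simple_roots (polygon_roots e f n) {e, circle e f (root_angle n (int n - 1))}"
  unfolding simple_roots_def
proof (intro conjI ballI)
  let ?b = "circle e f (root_angle n (int n - 1))"
  have "?b \<notin> span {e}" using circle_root_angle_pred_n_notin_span[OF n] .
  moreover have "independent {e}" using inner_e by (auto simp: independent_insert)
  ultimately show "independent {e, ?b}" by (metis independent_insertI insert_commute)
  have "e \<noteq> ?b" using \<open>?b \<notin> span {e}\<close> span_base[of e "{e}"] by auto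
  show "{e, ?b} \<subseteq> polygon_roots e f n"
    using circle_zero[of e f] root_angle_zero[of n] unfolding polygon_roots_def
    by (metis insert_subset rangeI image_eqI empty_subsetI)
  fix \<beta> assume "\<beta> \<in> polygon_roots e f n"
  then obtain a b where "\<beta> = a *\<^sub>R e + b *\<^sub>R ?b" "(a \<ge> 0 \<and> b \<ge> 0) \<or> (a \<le> 0 \<and> b \<le> 0)"
    using polygon_root_sign_combination[OF n] by blast
  then show "\<exists>c. \<beta> = (\<Sum>\<delta>\<in>{e, ?b}. c \<delta> *\<^sub>R \<delta>)
      \<and> ((\<forall>\<delta>\<in>{e, ?b}. c \<delta> \<ge> 0) \<or> (\<forall>\<delta>\<in>{e, ?b}. c \<delta> \<le> 0))"
    using \<open>e \<noteq> ?b\<close> by (intro exI[of _ "\<lambda>\<delta>. if \<delta> = e then a else b"]) auto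
qed

end

locale orthogonal_planes =
  p1: orthonormal_pair e1 f1 + p2: orthonormal_pair e2 f2 for e1 f1 e2 f2 :: "'a::real_inner" +
  assumes inner_e1_e2: "e1 \<bullet> e2 = 0" and inner_e1_f2: "e1 \<bullet> f2 = 0"
    and inner_f1_e2: "f1 \<bullet> e2 = 0" and inner_f1_f2: "f1 \<bullet> f2 = 0"
begin

lemma inner_circle_circle: "circle e1 f1 a \<bullet> circle e2 f2 b = 0"
  by (simp add: circle_def inner_add_left inner_add_right inner_e1_e2 inner_e1_f2 inner_f1_e2
      inner_f1_f2)

lemma inner_polygon_roots:
  "x \<in> polygon_roots e1 f1 n \<Longrightarrow> y \<in> polygon_roots e2 f2 n \<Longrightarrow> x \<bullet> y = 0"
  by (auto simp: polygon_roots_def inner_circle_circle)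

lemma root_system_polygon_roots_Un:
  "n > 0 \<Longrightarrow> root_system (polygon_roots e1 f1 n \<union> polygon_roots e2 f2 n)"
  by (intro root_system_Un_orthogonal p1.root_system_polygon_roots p2.root_system_polygon_roots
      inner_polygon_roots)

lemma type_I2_sum_polygon_roots_Un:
  "n > 0 \<Longrightarrow> type_I2_sum n (polygon_roots e1 f1 n \<union> polygon_roots e2 f2 n)"
  unfolding type_I2_sum_def
  by (intro exI[of _ "polygon_roots e1 f1 n"] exI[of _ "polygon_roots e2 f2 n"] conjI refl ballI
      p1.type_I2_polygon_roots p2.type_I2_polygon_roots
      inner_span_orthogonal[OF inner_polygon_roots])

lemma simple_roots_polygon_roots_Un:
  assumes "n \<ge> 2"
  shows "simple_roots (polygon_roots e1 f1 n \<union> polygon_roots e2 f2 n)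
    {e1, circle e1 f1 (root_angle n (int n - 1)), e2, circle e2 f2 (root_angle n (int n - 1))}"
  using simple_roots_Un_orthogonal[OF p1.simple_roots_polygon_roots[OF assms]
      p2.simple_roots_polygon_roots[OF assms] _ _ inner_polygon_roots[of _ n]]
  by (simp add: insert_commute)

lemma distinct_simple_roots:
  assumes "n \<ge> 2"
  shows "distinct [e1, circle e1 f1 (root_angle n (int n - 1)),
                   e2, circle e2 f2 (root_angle n (int n - 1))]"
proof -
  have "x \<noteq> y" if "x \<in> polygon_roots e1 f1 n" "y \<in> polygon_roots e2 f2 n" for x y
  proof
    assume "x = y"
    then have "x \<bullet> x = 0" using inner_polygon_roots[OF that] by simp
    moreover have "norm x = 1" using that(1) by (auto simp: polygon_roots_def)
    ultimately show False by simp
  qed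
  moreover have "e1 \<noteq> circle e1 f1 (root_angle n (int n - 1))"
    using p1.circle_root_angle_pred_n_notin_span[OF assms] span_base[of e1 "{e1}"] by auto
  moreover have "e2 \<noteq> circle e2 f2 (root_angle n (int n - 1))"
    using p2.circle_root_angle_pred_n_notin_span[OF assms] span_base[of e2 "{e2}"] by auto
  ultimately show ?thesis
    using p1.simple_roots_polygon_roots[OF assms] p2.simple_roots_polygon_roots[OF assms]
    by (auto simp: simple_roots_def)
qed

lemma cartan_simple_roots:
  assumes "n > 0"
  shows "\<forall>i<4. \<forall>j<4. cartan [e1, circle e1 f1 (root_angle n (int n - 1)),
                              e2, circle e2 f2 (root_angle n (int n - 1))] i j
                    = cartan_I2I2 n i j"
proof (intro allI impI)
  let ?\<gamma> = "root_angle n (int n - 1)"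
  have cos: "cos (?\<gamma> - 0) = - cos (pi / real n)" "cos (0 - ?\<gamma>) = - cos (pi / real n)"
    using assms by (simp_all add: root_angle_pred_n)
  have "e1 = circle e1 f1 0" "e2 = circle e2 f2 0" by simp_all
  then have inner:
    "e1 \<bullet> e1 = 1" "e1 \<bullet> circle e1 f1 ?\<gamma> = - cos (pi / real n)"
    "circle e1 f1 ?\<gamma> \<bullet> e1 = - cos (pi / real n)" "circle e1 f1 ?\<gamma> \<bullet> circle e1 f1 ?\<gamma> = 1"
    "e2 \<bullet> e2 = 1" "e2 \<bullet> circle e2 f2 ?\<gamma> = - cos (pi / real n)"
    "circle e2 f2 ?\<gamma> \<bullet> e2 = - cos (pi / real n)" "circle e2 f2 ?\<gamma> \<bullet> circle e2 f2 ?\<gamma> = 1"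
    "e1 \<bullet> e2 = 0" "e1 \<bullet> circle e2 f2 ?\<gamma> = 0" "circle e1 f1 ?\<gamma> \<bullet> e2 = 0"
    "circle e1 f1 ?\<gamma> \<bullet> circle e2 f2 ?\<gamma> = 0"
    "e2 \<bullet> e1 = 0" "circle e2 f2 ?\<gamma> \<bullet> e1 = 0" "e2 \<bullet> circle e1 f1 ?\<gamma> = 0"
    "circle e2 f2 ?\<gamma> \<bullet> circle e1 f1 ?\<gamma> = 0"
    by (metis p1.inner_circle p2.inner_circle inner_circle_circle inner_commute cos cos_zero
        diff_self)+
  fix i j :: nat assume "i < 4" "j < 4"
  then have "i \<in> {0, 1, 2, 3}" "j \<in> {0, 1, 2, 3}" by auto
  then show "cartan [e1, circle e1 f1 ?\<gamma>, e2, circle e2 f2 ?\<gamma>] i j = cartan_I2I2 n i j"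
    by (auto simp: cartan_def cartan_I2I2_def Let_def inner)
qed

end

section \<open>The group generated by the roots and the pseudoscalar\<close>

locale orthonormal_pair3 = orthonormal_pair u w for u w :: "real^3"
begin

abbreviation normal :: "real^3" where
  "normal \<equiv> cross3 u w"

abbreviation rotor :: "real \<Rightarrow> cl3" where
  "rotor t \<equiv> cl_even (cos t) (sin t *\<^sub>R normal)"

abbreviation root_vector :: "real \<Rightarrow> cl3" where
  "root_vector t \<equiv> vec (circle u w t)"

abbreviation dual_root :: "real \<Rightarrow> cl3" where
  "dual_root t \<equiv> cl_even 0 (circle u w t)"

abbreviation dual_rotor :: "real \<Rightarrow> cl3" where
  "dual_rotor t \<equiv> cl_odd (- (sin t *\<^sub>R normal)) (cos t)"

lemma inner_normal: "normal \<bullet> normal = 1"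
  using norm_cross_dot[of u w] inner_e inner_f inner_e_f
  by (simp add: norm_eq_sqrt_inner power2_eq_square)

lemma inner_circle_normal: "circle u w a \<bullet> normal = 0"
proof -
  have "u \<bullet> normal = 0" "w \<bullet> normal = 0"
    using dot_cross_self[of u w] by (simp_all add: inner_commute)
  then show ?thesis by (simp add: circle_def inner_add_left)
qed

lemma cross_circle_normal: "cross3 (circle u w a) normal = sin a *\<^sub>R u - cos a *\<^sub>R w"
proof -
  have "cross3 u normal = - w" using Lagrange[of u u w] inner_e inner_e_f by simp
  moreover have "cross3 w normal = u"
    using Lagrange[of w u w] inner_f inner_e_f by (simp add: inner_commute)
  ultimately show ?thesis
    by (simp add: circle_def cross_add_left cross_mult_left algebra_simps)
qed

lemma cross_circle_circle: "cross3 (circle u w a) (circle u w b) = sin (b - a) *\<^sub>R normal"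
proof -
  have "cross3 w u = - normal" using cross_skew[of w u] by simp
  then show ?thesis
    by (simp add: circle_def cross_add_left cross_add_right cross_mult_left cross_mult_right
        sin_diff algebra_simps)
qed

lemma vec_mult_rotor: "vec (circle u w a) \<odot> rotor t = root_vector (a + t)"
proof -
  have "cos t *\<^sub>R circle u w a - cross3 (circle u w a) (sin t *\<^sub>R normal) = circle u w (a + t)"
    unfolding cross_mult_right cross_circle_normal
    by (simp add: circle_def cos_add sin_add algebra_simps)
  then show ?thesis
    using vec_mult_cl_even[of "circle u w a" "cos t" "sin t *\<^sub>R normal"]
    by (simp add: inner_circle_normal flip: vec_eq_cl_odd)
qed

lemma vec_mult_root_vector: "vec (circle u w a) \<odot> root_vector b = rotor (b - a)"
  by (simp add: vec_eq_cl_odd[of "circle u w b"] vec_mult_cl_odd inner_circle cross_circle_circle)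

lemma vec_mult_dual_root: "vec (circle u w a) \<odot> dual_root b = dual_rotor (b - a)"
  by (simp add: vec_mult_cl_even inner_circle cross_circle_circle)

lemma vec_mult_dual_rotor: "vec (circle u w a) \<odot> dual_rotor t = dual_root (a + t)"
proof -
  have "cross3 (circle u w a) (- (sin t *\<^sub>R normal)) + cos t *\<^sub>R circle u w a = circle u w (a + t)"
    unfolding cross_minus_right cross_mult_right cross_circle_normal
    by (simp add: circle_def cos_add sin_add algebra_simps)
  then show ?thesis by (simp add: vec_mult_cl_odd inner_circle_normal)
qed

lemma pseudo_mult_rotor: "pseudo \<odot> rotor t = dual_rotor t"
  by (simp add: pseudo_mult_cl_even)

lemma pseudo_mult_root_vector: "pseudo \<odot> root_vector a = dual_root a"
  by (simp add: vec_eq_cl_odd pseudo_mult_cl_odd)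

lemma pseudo_mult_dual_root: "pseudo \<odot> dual_root a = root_vector (a + pi)"
  by (simp add: vec_eq_cl_odd pseudo_mult_cl_even circle_add_pi)

lemma pseudo_mult_dual_rotor: "pseudo \<odot> dual_rotor t = rotor (t + pi)"
  by (simp add: pseudo_mult_cl_odd)

lemma neg_pseudo_mult_rotor: "cl_odd 0 (- 1) \<odot> rotor t = dual_rotor (t + pi)"
  by (simp add: neg_pseudo_mult_cl_even)

lemma neg_pseudo_mult_root_vector: "cl_odd 0 (- 1) \<odot> root_vector a = dual_root (a + pi)"
  by (simp add: vec_eq_cl_odd neg_pseudo_mult_cl_odd circle_add_pi)

lemma neg_pseudo_mult_dual_root: "cl_odd 0 (- 1) \<odot> dual_root a = root_vector a"
  by (simp add: vec_eq_cl_odd neg_pseudo_mult_cl_even)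

lemma neg_pseudo_mult_dual_rotor: "cl_odd 0 (- 1) \<odot> dual_rotor t = rotor t"
  by (simp add: neg_pseudo_mult_cl_odd)


lemma orthogonal_planes_to4:
  "orthogonal_planes (to4 cl_one) (embed3 normal) (embed3 u) (embed3 w)"
proof -
  have "normal \<bullet> u = 0" "normal \<bullet> w = 0" using dot_cross_self[of u w] by simp_all
  then show ?thesis
    by unfold_locales
      (simp_all add: inner_to4_one inner_embed3 inner_normal inner_e inner_f inner_e_f)
qed

lemma to4_simple_root_products:
  "to4 (vec u \<odot> vec u) = to4 cl_one"
  "to4 (vec u \<odot> vec (circle u w t)) = circle (to4 cl_one) (embed3 normal) t"
  "to4 (vec u \<odot> pseudo) = embed3 u"
  "to4 (vec (circle u w t) \<odot> pseudo) = circle (embed3 u) (embed3 w) t"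
  using vec_mult_self[OF inner_e] vec_mult_root_vector[of 0 t]
  by (simp_all add: vec_mult_pseudo to4_cl_even circle_def embed3_add embed3_scaleR)

end

locale dihedral_frame = orthonormal_pair3 +
  fixes n :: nat
  assumes n_pos: "n > 0"
begin

abbreviation angles :: "real set" where
  "angles \<equiv> range (root_angle n)"

abbreviation generators :: "cl3 set" where
  "generators \<equiv> vec ` polygon_roots u w n \<union> {pseudo}"

definition P_elements :: "cl3 set" where
  "P_elements = rotor ` angles \<union> root_vector ` angles \<union> dual_root ` angles \<union> dual_rotor ` angles"

lemma angles_add: "a \<in> angles \<Longrightarrow> b \<in> angles \<Longrightarrow> a + b \<in> angles"
  by (auto simp flip: root_angle_add)

lemma angles_diff: "a \<in> angles \<Longrightarrow> b \<in> angles \<Longrightarrow> b - a \<in> angles"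
  by (auto simp flip: root_angle_diff)

lemma angles_add_pi: "a \<in> angles \<Longrightarrow> a + pi \<in> angles"
  using n_pos by (auto simp flip: root_angle_add_n)

lemma zero_in_angles: "0 \<in> angles"
  by (metis rangeI root_angle_zero)

lemma P_elementsE:
  assumes "x \<in> P_elements"
  obtains (rotor) t where "t \<in> angles" "x = rotor t"
    | (root_vector) t where "t \<in> angles" "x = root_vector t"
    | (dual_root) t where "t \<in> angles" "x = dual_root t"
    | (dual_rotor) t where "t \<in> angles" "x = dual_rotor t"
  using assms unfolding P_elements_def by (elim UnE imageE) blast+

lemma P_elementsI:
  "t \<in> angles \<Longrightarrow> rotor t \<in> P_elements" "t \<in> angles \<Longrightarrow> root_vector t \<in> P_elements"
  "t \<in> angles \<Longrightarrow> dual_root t \<in> P_elements" "t \<in> angles \<Longrightarrow> dual_rotor t \<in> P_elements"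
  by (simp_all add: P_elements_def)

lemma vec_mult_P_elements:
  assumes a: "a \<in> angles" and "x \<in> P_elements"
  shows "vec (circle u w a) \<odot> x \<in> P_elements"
  using \<open>x \<in> P_elements\<close>
proof (cases rule: P_elementsE)
  case (rotor t)
  then show ?thesis by (simp only: vec_mult_rotor P_elementsI angles_add a)
next
  case (root_vector t)
  then show ?thesis by (simp only: vec_mult_root_vector P_elementsI angles_diff a)
next
  case (dual_root t)
  then show ?thesis by (simp only: vec_mult_dual_root P_elementsI angles_diff a)
next
  case (dual_rotor t)
  then show ?thesis by (simp only: vec_mult_dual_rotor P_elementsI angles_add a)
qed

lemma pseudo_mult_P_elements:
  assumes "x \<in> P_elements"
  shows "pseudo \<odot> x \<in> P_elements"
  using assms
proof (cases rule: P_elementsE)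
  case (rotor t)
  then show ?thesis by (simp only: pseudo_mult_rotor P_elementsI)
next
  case (root_vector t)
  then show ?thesis by (simp only: pseudo_mult_root_vector P_elementsI)
next
  case (dual_root t)
  then show ?thesis by (simp only: pseudo_mult_dual_root P_elementsI angles_add_pi)
next
  case (dual_rotor t)
  then show ?thesis by (simp only: pseudo_mult_dual_rotor P_elementsI angles_add_pi)
qed

lemma neg_pseudo_mult_P_elements:
  assumes "x \<in> P_elements"
  shows "cl_odd 0 (- 1) \<odot> x \<in> P_elements"
  using assms
proof (cases rule: P_elementsE)
  case (rotor t)
  then show ?thesis by (simp only: neg_pseudo_mult_rotor P_elementsI angles_add_pi)
next
  case (root_vector t)
  then show ?thesis by (simp only: neg_pseudo_mult_root_vector P_elementsI angles_add_pi)
next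
  case (dual_root t)
  then show ?thesis by (simp only: neg_pseudo_mult_dual_root P_elementsI)
next
  case (dual_rotor t)
  then show ?thesis by (simp only: neg_pseudo_mult_dual_rotor P_elementsI)
qed

lemma gen_group_subset_P_elements: "gen_group generators \<subseteq> P_elements"
proof
  fix x assume "x \<in> gen_group generators"
  then show "x \<in> P_elements"
  proof (induction rule: gen_group.induct)
    case one
    show ?case using P_elementsI(1)[OF zero_in_angles] by (simp add: cl_one_eq_cl_even)
  next
    case (gen s g)
    then show ?case
      by (auto simp: polygon_roots_def vec_mult_P_elements pseudo_mult_P_elements)
  next
    case (inv s y g)
    show ?case
    proof (cases "s = pseudo")
      case True
      then have "y = cl_odd 0 (- 1)"
        using left_inverse_unique[OF _ pseudo_mult_inverse] inv.hyps(3) by blast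
      then show ?thesis using neg_pseudo_mult_P_elements[OF inv.IH] by simp
    next
      case False
      then obtain a where a: "a \<in> angles" "s = vec (circle u w a)"
        using inv.hyps(1) by (auto simp: polygon_roots_def)
      then have "y = s"
        using left_inverse_unique[OF _ vec_mult_self] inv.hyps(3) inner_circle[of a a] by simp
      then show ?thesis using vec_mult_P_elements[OF a(1) inv.IH] a(2) by simp
    qed
  qed
qed

lemma P_elements_subset_gen_group: "P_elements \<subseteq> gen_group generators"
proof -
  have root_vector: "root_vector t \<in> gen_group generators" if "t \<in> angles" for t
    using gen_group.gen[OF _ gen_group.one, of "root_vector t"] that
    by (auto simp: polygon_roots_def)
  have "u \<in> polygon_roots u w n"
    using zero_in_angles unfolding polygon_roots_def by (metis circle_zero image_eqI)
  then have rotor: "rotor t \<in> gen_group generators" if "t \<in> angles" for t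
    using gen_group.gen[OF _ root_vector[OF that], of "vec u"] vec_mult_root_vector[of 0 t]
    by simp
  have "dual_root t \<in> gen_group generators" "dual_rotor t \<in> gen_group generators"
    if "t \<in> angles" for t
    using gen_group.gen[OF _ root_vector[OF that], of pseudo]
      gen_group.gen[OF _ rotor[OF that], of pseudo]
    by (simp_all add: pseudo_mult_root_vector pseudo_mult_rotor)
  then show ?thesis using root_vector rotor by (auto simp: P_elements_def)
qed

lemma gen_group_eq_P_elements: "gen_group generators = P_elements"
  using gen_group_subset_P_elements P_elements_subset_gen_group by blast

lemma even_part_gen_group:
  "gen_group generators \<inter> even_sub = rotor ` angles \<union> dual_root ` angles"
proof -
  have "root_vector t \<notin> even_sub" for t
  proof
    assume "root_vector t \<in> even_sub"
    then have "circle u w t = 0" by (simp add: vec_eq_cl_odd cl_odd_in_even_sub_iff)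
    then show False by (metis norm_circle norm_zero zero_neq_one)
  qed
  moreover have "dual_rotor t \<notin> even_sub" for t
  proof
    assume "dual_rotor t \<in> even_sub"
    then have "cos t = 0" "sin t = 0" using inner_normal by (auto simp: cl_odd_in_even_sub_iff)
    then show False using sin_cos_squared_add[of t] by simp
  qed
  ultimately show ?thesis
    unfolding gen_group_eq_P_elements P_elements_def by (auto simp: cl_even_in_even_sub)
qed

lemma to4_even_part_gen_group:
  "to4 ` (gen_group generators \<inter> even_sub)
     = polygon_roots (to4 cl_one) (embed3 normal) n \<union> polygon_roots (embed3 u) (embed3 w) n"
  unfolding even_part_gen_group image_Un
  by (simp add: polygon_roots_def image_image to4_cl_even circle_def embed3_add embed3_scaleR)

end

theorem mainTheorem4:
  fixes n :: nat and \<alpha>1 \<alpha>2 :: "real^3" and \<Phi> :: "(real^3) set"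
    and P G :: "cl3 set" and \<beta> :: "(real^4) list"
  assumes "n \<ge> 2"
    and "norm \<alpha>1 = 1" and "norm \<alpha>2 = 1"
    and "\<alpha>1 \<bullet> \<alpha>2 = - cos (pi / real n)"
    and "\<Phi> = dihedral_roots \<alpha>1 \<alpha>2"
    and "P = gen_group (vec ` \<Phi> \<union> {pseudo})"
    and "G = P \<inter> even_sub"
    and "\<beta> = [to4 (vec \<alpha>1 \<odot> vec \<alpha>1), to4 (vec \<alpha>1 \<odot> vec \<alpha>2),
              to4 (vec \<alpha>1 \<odot> pseudo), to4 (vec \<alpha>2 \<odot> pseudo)]"
  shows "root_system (to4 ` G) \<and> type_I2_sum n (to4 ` G)
       \<and> distinct \<beta> \<and> simple_roots (to4 ` G) (set \<beta>)
       \<and> (\<forall>i<4. \<forall>j<4. cartan \<beta> i j = cartan_I2I2 n i j)"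
proof -
  let ?\<gamma> = "root_angle n (int n - 1)"
  have n: "n > 0" using assms(1) by simp
  have "\<alpha>1 \<bullet> \<alpha>2 = cos ?\<gamma>" using assms(4) n by (simp add: root_angle_pred_n)
  then obtain w where "orthonormal_pair \<alpha>1 w" and \<alpha>2: "\<alpha>2 = circle \<alpha>1 w ?\<gamma>"
    using orthonormal_completion assms(2,3) sin_root_angle_pred_n_pos[OF assms(1)] by blast
  then interpret dihedral_frame \<alpha>1 w n
    using n by (simp add: dihedral_frame_def dihedral_frame_axioms_def orthonormal_pair3_def)
  interpret orthogonal_planes "to4 cl_one" "embed3 normal" "embed3 \<alpha>1" "embed3 w"
    by (rule orthogonal_planes_to4)
  have "\<Phi> = polygon_roots \<alpha>1 w n"
    using assms(5) \<alpha>2 polygon_roots_eq_dihedral_roots[OF n] by simp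
  then have G: "to4 ` G = polygon_roots (to4 cl_one) (embed3 normal) n
                       \<union> polygon_roots (embed3 \<alpha>1) (embed3 w) n"
    using assms(6,7) to4_even_part_gen_group by simp
  have \<beta>: "\<beta> = [to4 cl_one, circle (to4 cl_one) (embed3 normal) ?\<gamma>,
               embed3 \<alpha>1, circle (embed3 \<alpha>1) (embed3 w) ?\<gamma>]"
    using assms(8) by (simp add: \<alpha>2 to4_simple_root_products)
  show ?thesis
    unfolding G \<beta>
    using root_system_polygon_roots_Un[OF n] type_I2_sum_polygon_roots_Un[OF n]
      distinct_simple_roots[OF assms(1)] simple_roots_polygon_roots_Un[OF assms(1)]
      cartan_simple_roots[OF n]
    by (simp only: list.set)
qed

end
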